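(* Let $n\ge2$ be an integer and let $\mathfrak{R}$ be a unital alternative ring which is $2$-, $3$-, $(n-1)$- and $(n-3)$-torsion free, with a nontrivial idempotent $e_1$, $e_2=1-e_1$, and Peirce decomposition $\mathfrak{R}=\mathfrak{R}_{11}\oplus\mathfrak{R}_{12}\oplus\mathfrak{R}_{21}\oplus\mathfrak{R}_{22}$, satisfying: (1) if $i\ne j$, $x_{ij}\in\mathfrak{R}_{ij}$ and $x_{ij}\mathfrak{R}_{ji}=0$, then $x_{ij}=0$; (2) if $x_{11}\in\mathfrak{R}_{11}$ and $x_{11}\mathfrak{R}_{12}=0$ or $\mathfrak{R}_{21}x_{11}=0$, then $x_{11}=0$; (3) if $x_{22}\in\mathfrak{R}_{22}$ and $\mathfrak{R}_{12}x_{22}=0$ or $x_{22}\mathfrak{R}_{21}=0$, then $x_{22}=0$; (4) if $z\in\mathcal{Z}(\mathfrak{R})$, $z\ne0$, then $z\mathfrak{R}=\mathfrak{R}$. Let $\mathcal{D}\colon\mathfrak{R}\to\mathfrak{R}$ be a multiplicative Lie $n$-derivation satisfying (a) $e_2\mathcal{D}(\mathfrak{R}_{11})e_2\subseteq\mathcal{Z}(\mathfrak{R})e_2$, (b) $e_1\mathcal{D}(\mathfrak{R}_{22})e_1\subseteq\mathcal{Z}(\mathfrak{R})e_1$, (c) $\mathcal{D}(\mathfrak{R}_{ij})\subseteq\mathfrak{R}_{ij}$ for $i\ne j$. Put $y=e_1\mathcal{D}(e_1)e_2+e_2\mathcal{D}(e_1)e_1$, $z=e_1$, and $f_{y,z}=[L_y,L_z]+[L_y,R_z]+[R_y,R_z]$.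 Then $\mathcal{D}(e_1)-f_{y,z}(e_1)\in\mathcal{Z}(\mathfrak{R})$.
   Context: $\mathfrak{R}$ is alternative if $(x,x,y)=0=(y,x,x)$ for all $x,y$, where $(x,y,z)=(xy)z-x(yz)$ (not necessarily associative). $k$-torsion free: $kx=0\Rightarrow x=0$. $[x,y]=xy-yx$; $\mathcal{Z}(\mathfrak{R})=\{r:[r,x]=0\ \forall x\}$; $\mathcal{Z}(\mathfrak{R})e_i=\{ze_i:z\in\mathcal{Z}(\mathfrak{R})\}$. $p_1(x)=x$, $p_n(x_1,\dots,x_n)=[p_{n-1}(x_1,\dots,x_{n-1}),x_n]$; a (not necessarily additive) map $\mathcal{D}$ is a multiplicative Lie $n$-derivation if $\mathcal{D}(p_n(x_1,\dots,x_n))=\sum_{i=1}^n p_n(x_1,\dots,\mathcal{D}(x_i),\dots,x_n)$ for all $x_i$. $\mathfrak{R}_{ij}=e_i\mathfrak{R}e_j$. $L_y(x)=yx$, $R_y(x)=xy$ are the left and right multiplication operators, and $[S,T]=S\circ T-T\circ S$ for operators $S,T$ on $\mathfrak{R}$. *)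

theory Defs
  imports Main
begin

text \<open>A (not necessarily associative) ring is modelled by an additive abelian group
  type together with an explicit multiplication function.\<close>

definition assoc3 :: "('a::ab_group_add \<Rightarrow> 'a \<Rightarrow> 'a) \<Rightarrow> 'a \<Rightarrow> 'a \<Rightarrow> 'a \<Rightarrow> 'a" where
  "assoc3 mult x y z = mult (mult x y) z - mult x (mult y z)"

definition unital_alternative_ring :: "('a::ab_group_add \<Rightarrow> 'a \<Rightarrow> 'a) \<Rightarrow> 'a \<Rightarrow> bool" where
  "unital_alternative_ring mult one \<longleftrightarrow>
     (\<forall>x y z. mult x (y + z) = mult x y + mult x z) \<and>
     (\<forall>x y z. mult (x + y) z = mult x z + mult y z) \<and>
     (\<forall>x. mult one x = x \<and> mult x one = x) \<and>
     (\<forall>x y. assoc3 mult x x y = 0 \<and> assoc3 mult y x x = 0)"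

fun nsm :: "nat \<Rightarrow> 'a::ab_group_add \<Rightarrow> 'a" where
  "nsm 0 x = 0"
| "nsm (Suc k) x = x + nsm k x"

definition zsm :: "int \<Rightarrow> 'a::ab_group_add \<Rightarrow> 'a" where
  "zsm k x = (if 0 \<le> k then nsm (nat k) x else - nsm (nat (- k)) x)"

definition torsion_free :: "int \<Rightarrow> 'a::ab_group_add itself \<Rightarrow> bool" where
  "torsion_free k _ \<longleftrightarrow> (\<forall>x::'a. zsm k x = 0 \<longrightarrow> x = 0)"

definition lie_br :: "('a::ab_group_add \<Rightarrow> 'a \<Rightarrow> 'a) \<Rightarrow> 'a \<Rightarrow> 'a \<Rightarrow> 'a" where
  "lie_br mult x y = mult x y - mult y x"

definition center :: "('a::ab_group_add \<Rightarrow> 'a \<Rightarrow> 'a) \<Rightarrow> 'a set" where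
  "center mult = {r. \<forall>x. lie_br mult r x = 0}"

fun lie_p :: "('a::ab_group_add \<Rightarrow> 'a \<Rightarrow> 'a) \<Rightarrow> 'a list \<Rightarrow> 'a" where
  "lie_p mult [] = 0"
| "lie_p mult (x # xs) = foldl (lie_br mult) x xs"

definition mult_lie_n_derivation ::
    "('a::ab_group_add \<Rightarrow> 'a \<Rightarrow> 'a) \<Rightarrow> nat \<Rightarrow> ('a \<Rightarrow> 'a) \<Rightarrow> bool" where
  "mult_lie_n_derivation mult n D \<longleftrightarrow>
     (\<forall>xs. length xs = n \<longrightarrow>
        D (lie_p mult xs) = (\<Sum>i<n. lie_p mult (xs[i := D (xs ! i)])))"

definition peirce :: "('a::ab_group_add \<Rightarrow> 'a \<Rightarrow> 'a) \<Rightarrow> 'a \<Rightarrow> 'a \<Rightarrow> 'a set" where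
  "peirce mult ei ej = {mult (mult ei x) ej | x. True}"

definition Lop :: "('a \<Rightarrow> 'a \<Rightarrow> 'a) \<Rightarrow> 'a \<Rightarrow> 'a \<Rightarrow> 'a" where
  "Lop mult y = (\<lambda>x. mult y x)"

definition Rop :: "('a \<Rightarrow> 'a \<Rightarrow> 'a) \<Rightarrow> 'a \<Rightarrow> 'a \<Rightarrow> 'a" where
  "Rop mult y = (\<lambda>x. mult x y)"

definition op_comm :: "('a::ab_group_add \<Rightarrow> 'a) \<Rightarrow> ('a \<Rightarrow> 'a) \<Rightarrow> 'a \<Rightarrow> 'a" where
  "op_comm S T = (\<lambda>x. S (T x) - T (S x))"

definition f_yz :: "('a::ab_group_add \<Rightarrow> 'a \<Rightarrow> 'a) \<Rightarrow> 'a \<Rightarrow> 'a \<Rightarrow> 'a \<Rightarrow> 'a" where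
  "f_yz mult y z = (\<lambda>x. op_comm (Lop mult y) (Lop mult z) x
                      + op_comm (Lop mult y) (Rop mult z) x
                      + op_comm (Rop mult y) (Rop mult z) x)"

end

theory Submission
  imports Defs
begin

(* Write d = D(e1) and d_ij = e_i d e_j.  A direct computation gives f_{y,z}(e1) = d12 + d21,
   so the claim is that d11 + d22 is central; by (a), d22 = z e2 with z central.
   For r in R12 the Lie polynomial p_n(r, e1, ..., e1) equals r (for even n use
   p_n(e1, r, e1, ..., e1) instead), and the R12-component of D applied to it consists of D r
   and n - 1 copies of -[r, d]_12.  Hence (n - 1) [r, d]_12 = 0, and since
   [r, d]_12 = r d22 - d11 r = (z e1 - d11) r, condition (2) forces d11 = z e1, so that
   d11 + d22 = z.  Only (2), (a), the R12-part of (c), 3-torsion freeness (which puts central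
   elements into the nucleus) and (n - 1)-torsion freeness are needed. *)

lemma nsm_minus: "nsm m (- x) = - nsm m (x::'a::ab_group_add)"
  by (induction m) (simp_all add: add.commute)

lemma sum_const_eq_nsm: "(\<Sum>i<m. c) = nsm m (c::'a::ab_group_add)"
  by (induction m) (simp_all add: add.commute)

lemma torsion_freeD:
  assumes "torsion_free k TYPE('a::ab_group_add)" "0 \<le> k" "nsm (nat k) (x::'a) = 0"
  shows "x = 0"
  using assms unfolding torsion_free_def zsm_def by auto

locale alternative_ring =
  fixes mult :: "'a::ab_group_add \<Rightarrow> 'a \<Rightarrow> 'a" (infixl "\<odot>" 70) and one :: 'a
  assumes unital_alternative: "unital_alternative_ring mult one"
begin

lemma mult_add_right [simp]: "x \<odot> (y + z) = x \<odot> y + x \<odot> z"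
  and mult_add_left [simp]: "(x + y) \<odot> z = x \<odot> z + y \<odot> z"
  and one_mult [simp]: "one \<odot> x = x"
  and mult_one [simp]: "x \<odot> one = x"
  and assoc3_left_alternative: "assoc3 mult x x y = 0"
  and assoc3_right_alternative: "assoc3 mult y x x = 0"
  using unital_alternative unfolding unital_alternative_ring_def by blast+

lemma left_alternative [simp]: "(x \<odot> x) \<odot> y = x \<odot> (x \<odot> y)"
  using assoc3_left_alternative unfolding assoc3_def by simp

lemma right_alternative [simp]: "(y \<odot> x) \<odot> x = y \<odot> (x \<odot> x)"
  using assoc3_right_alternative unfolding assoc3_def by simp

lemma mult_zero_right [simp]: "x \<odot> 0 = 0"
  using mult_add_right[of x 0 0] by simp

lemma mult_zero_left [simp]: "0 \<odot> x = 0"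
  using mult_add_left[of 0 0 x] by simp

lemma mult_minus_right [simp]: "x \<odot> (- y) = - (x \<odot> y)"
  using mult_add_right[of x y "- y"] by (simp add: add_eq_0_iff)

lemma mult_minus_left [simp]: "(- x) \<odot> y = - (x \<odot> y)"
  using mult_add_left[of x "- x" y] by (simp add: add_eq_0_iff)

lemma mult_diff_right [simp]: "x \<odot> (y - z) = x \<odot> y - x \<odot> z"
  using mult_add_right[of x y "- z"] by simp

lemma mult_diff_left [simp]: "(x - y) \<odot> z = x \<odot> z - y \<odot> z"
  using mult_add_left[of x "- y" z] by simp

lemma assoc3_swap12: "assoc3 mult y x z = - assoc3 mult x y z"
  using assoc3_left_alternative[of "x + y" z]
  unfolding assoc3_def mult_add_left mult_add_right
  by (simp add: algebra_simps)

lemma assoc3_swap23: "assoc3 mult x z y = - assoc3 mult x y z"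
  using assoc3_right_alternative[of x "y + z"]
  unfolding assoc3_def mult_add_left mult_add_right
  by (simp add: algebra_simps)

lemma flexible: "(x \<odot> y) \<odot> x = x \<odot> (y \<odot> x)"
  using assoc3_swap23[of x x y] assoc3_left_alternative[of x y]
  unfolding assoc3_def by simp

lemma lie_br_anticommute: "lie_br mult y x = - lie_br mult x y"
  by (simp add: lie_br_def)

lemma lie_br_minus_left [simp]: "lie_br mult (- x) y = - lie_br mult x y"
  by (simp add: lie_br_def)

lemma center_commute: "c \<in> center mult \<Longrightarrow> c \<odot> x = x \<odot> c"
  unfolding center_def lie_br_def by auto

lemma assoc3_center_right:
  assumes tf3: "torsion_free 3 TYPE('a)" and c: "c \<in> center mult"
  shows "assoc3 mult x y c = 0"
proof -
  define A where "A = assoc3 mult x y c"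
  have "assoc3 mult x c y = assoc3 mult c x y + A"
    unfolding A_def assoc3_def using center_commute[OF c] by simp
  moreover have "assoc3 mult x c y = - A"
    unfolding A_def by (rule assoc3_swap23)
  moreover have "assoc3 mult c x y = A"
    unfolding A_def using assoc3_swap12[of c x y] assoc3_swap23[of x y c] by simp
  ultimately have "- A = A + A"
    by simp
  then have "nsm 3 A = 0"
    by (metis add.right_inverse add_0_right nsm.simps numeral_3_eq_3)
  then show ?thesis
    unfolding A_def using torsion_freeD[OF tf3] by simp
qed

lemma center_mult_assoc:
  assumes "torsion_free 3 TYPE('a)" and "c \<in> center mult"
  shows "(x \<odot> y) \<odot> c = x \<odot> (y \<odot> c)"
    and "(x \<odot> c) \<odot> y = x \<odot> (c \<odot> y)"
    and "(c \<odot> x) \<odot> y = c \<odot> (x \<odot> y)"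
  using assoc3_center_right[OF assms, of x y] assoc3_swap23[of x y c] assoc3_swap12[of x c y]
  unfolding assoc3_def by simp_all

end

lemma replicate_update:
  "i < m \<Longrightarrow> (replicate m x)[i := y] = replicate i x @ y # replicate (m - Suc i) x"
proof (induction m arbitrary: i)
  case (Suc m)
  then show ?case by (cases i) auto
qed simp

lemma lie_p_replicate_update:
  assumes "i < m"
  shows "lie_p mult (a # (replicate m b)[i := v]) =
    ((\<lambda>x. lie_br mult x b) ^^ (m - Suc i)) (lie_br mult (((\<lambda>x. lie_br mult x b) ^^ i) a) v)"
  using assms by (simp add: replicate_update foldl_conv_fold)

lemma mult_lie_n_derivationD:
  assumes "mult_lie_n_derivation mult n D" "length xs = n"
  shows "D (lie_p mult xs) = (\<Sum>i<n. lie_p mult (xs[i := D (xs ! i)]))"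
  using assms unfolding mult_lie_n_derivation_def by blast

locale alternative_ring_idempotent = alternative_ring +
  fixes e :: "'a::ab_group_add"
  assumes idempotent [simp]: "e \<odot> e = e"
begin

lemma idempotent_mult_left [simp]: "e \<odot> (e \<odot> u) = e \<odot> u"
  using left_alternative[of e u] by simp

lemma idempotent_flexible [simp]: "e \<odot> (u \<odot> e) = (e \<odot> u) \<odot> e"
  by (rule flexible[symmetric])

lemma idempotent_mult_expand_left: "e \<odot> (x \<odot> y) = (e \<odot> x) \<odot> y + (x \<odot> e) \<odot> y - x \<odot> (e \<odot> y)"
  using assoc3_swap12[of e x y] unfolding assoc3_def by (simp add: algebra_simps)

lemma idempotent_mult_expand_right: "(x \<odot> y) \<odot> e = x \<odot> (y \<odot> e) - (x \<odot> e) \<odot> y + x \<odot> (e \<odot> y)"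
  using assoc3_swap23[of x y e] unfolding assoc3_def by (simp add: algebra_simps)

definition proj12 :: "'a \<Rightarrow> 'a" where
  "proj12 x = (e \<odot> x) \<odot> (one - e)"

lemma proj12_eq: "proj12 x = e \<odot> x - (e \<odot> x) \<odot> e"
  unfolding proj12_def by simp

lemma proj12_mult_right:
  assumes "e \<odot> r = r" "r \<odot> e = 0"
  shows "proj12 (d \<odot> r) = ((e \<odot> d) \<odot> e) \<odot> r"
  using idempotent_mult_expand_left[of d r] idempotent_mult_expand_right[of "e \<odot> d" r]
    idempotent_mult_expand_right[of "d \<odot> e" r] idempotent_mult_expand_right[of d r] assms
  by (simp add: proj12_eq)

lemma proj12_mult_left:
  assumes "e \<odot> r = r" "r \<odot> e = 0"
  shows "proj12 (r \<odot> d) = r \<odot> (((one - e) \<odot> d) \<odot> (one - e))"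
  using idempotent_mult_expand_left[of r d] idempotent_mult_expand_right[of r d]
    idempotent_mult_expand_right[of r "e \<odot> d"] assms
  by (simp add: proj12_eq)

lemma proj12_add [simp]: "proj12 (x + y) = proj12 x + proj12 y"
  and proj12_minus [simp]: "proj12 (- x) = - proj12 x"
  and proj12_diff [simp]: "proj12 (x - y) = proj12 x - proj12 y"
  and proj12_zero [simp]: "proj12 0 = 0"
  unfolding proj12_def by simp_all

lemma proj12_sum: "proj12 (\<Sum>i<(m::nat). f i) = (\<Sum>i<m. proj12 (f i))"
  by (induction m) (simp_all add: proj12_def)

lemma proj12_lie_br_right: "proj12 (lie_br mult x e) = - proj12 x"
  by (simp add: proj12_eq lie_br_def)

lemma proj12_funpow_lie_br:
  "proj12 (((\<lambda>x. lie_br mult x e) ^^ m) a) = (if even m then proj12 a else - proj12 a)"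
  by (induction m) (simp_all add: proj12_lie_br_right)

lemma funpow_lie_br_peirce12:
  assumes "e \<odot> r = r" "r \<odot> e = 0"
  shows "((\<lambda>x. lie_br mult x e) ^^ m) r = (if even m then r else - r)"
  by (induction m) (simp_all add: assms lie_br_def)

lemma lie_p_peirce12_replicate:
  assumes "e \<odot> r = r" "r \<odot> e = 0" "even m"
  shows "lie_p mult (r # replicate m e) = r"
  using assms by (simp add: foldl_conv_fold funpow_lie_br_peirce12)

lemma proj12_lie_p_replicate_update:
  assumes "e \<odot> r = r" "r \<odot> e = 0" "even m" "i < m"
  shows "proj12 (lie_p mult (r # (replicate m e)[i := v])) = - proj12 (lie_br mult r v)"
proof -
  have "even i \<longleftrightarrow> odd (m - Suc i)"
    using assms by presburger
  then show ?thesis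
    unfolding lie_p_replicate_update[OF \<open>i < m\<close>]
    using assms by (simp add: proj12_funpow_lie_br funpow_lie_br_peirce12)
qed

lemma proj12_sum_lie_p_replicate_update:
  assumes "e \<odot> r = r" "r \<odot> e = 0" "even m"
  shows "proj12 (\<Sum>i<m. lie_p mult (r # (replicate m e)[i := v])) = - nsm m (proj12 (lie_br mult r v))"
  unfolding proj12_sum
  using assms by (simp del: lie_p.simps add: proj12_lie_p_replicate_update sum_const_eq_nsm nsm_minus)

lemma lie_n_derivation_proj12_odd:
  assumes D: "mult_lie_n_derivation mult (Suc m) D" and "even m"
    and r: "e \<odot> r = r" "r \<odot> e = 0" and Dr: "e \<odot> D r = D r" "D r \<odot> e = 0"
  shows "nsm m (proj12 (lie_br mult r (D e))) = 0"
proof -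
  have "D r = D (lie_p mult (r # replicate m e))"
    using r \<open>even m\<close> by (simp only: lie_p_peirce12_replicate)
  also have "\<dots> = lie_p mult (D r # replicate m e)
      + (\<Sum>i<m. lie_p mult (r # (replicate m e)[i := D e]))"
    using mult_lie_n_derivationD[OF D, of "r # replicate m e", unfolded sum.lessThan_Suc_shift]
    by (simp del: lie_p.simps)
  also have "lie_p mult (D r # replicate m e) = D r"
    using Dr \<open>even m\<close> by (rule lie_p_peirce12_replicate)
  finally have "proj12 (\<Sum>i<m. lie_p mult (r # (replicate m e)[i := D e])) = 0"
    by (simp del: lie_p.simps)
  then show ?thesis
    using proj12_sum_lie_p_replicate_update[OF r \<open>even m\<close>] by (simp del: lie_p.simps)
qed

lemma lie_n_derivation_proj12_even:
  assumes D: "mult_lie_n_derivation mult (Suc (Suc m)) D" and "even m"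
    and r: "e \<odot> r = r" "r \<odot> e = 0" and Dr: "e \<odot> D r = D r" "D r \<odot> e = 0"
  shows "nsm (Suc m) (proj12 (lie_br mult r (D e))) = 0"
proof -
  \<comment> \<open>Here p_n(r, e, ..., e) = -r, and D(-r) is out of reach as D need not be additive.\<close>
  have lie_p_e_Cons: "lie_p mult (e # x # xs) = lie_p mult (x # xs)" if "e \<odot> x = x" "x \<odot> e = 0" for x xs
    using that by (simp add: lie_br_def)
  have "D r = D (lie_p mult (e # r # replicate m e))"
    using r \<open>even m\<close> by (simp only: lie_p_e_Cons lie_p_peirce12_replicate)
  also have "\<dots> = lie_p mult (D e # r # replicate m e) + (lie_p mult (e # D r # replicate m e)
      + (\<Sum>i<m. lie_p mult (e # r # (replicate m e)[i := D e])))"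
    using mult_lie_n_derivationD[OF D, of "e # r # replicate m e", unfolded sum.lessThan_Suc_shift]
    by (simp del: lie_p.simps)
  also have "lie_p mult (e # D r # replicate m e) = D r"
    using Dr \<open>even m\<close> by (simp only: lie_p_e_Cons lie_p_peirce12_replicate)
  also have "(\<Sum>i<m. lie_p mult (e # r # (replicate m e)[i := D e]))
      = (\<Sum>i<m. lie_p mult (r # (replicate m e)[i := D e]))"
    using r by (simp only: lie_p_e_Cons)
  finally have "proj12 (lie_p mult (D e # r # replicate m e)
      + (\<Sum>i<m. lie_p mult (r # (replicate m e)[i := D e]))) = 0"
    by (simp del: lie_p.simps add: algebra_simps)
  moreover have "proj12 (lie_p mult (D e # r # replicate m e)) = - proj12 (lie_br mult r (D e))"
    using \<open>even m\<close> lie_br_anticommute[of "D e" r]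
    by (simp add: foldl_conv_fold proj12_funpow_lie_br)
  ultimately have "nsm m (proj12 (lie_br mult r (D e))) = - proj12 (lie_br mult r (D e))"
    using proj12_sum_lie_p_replicate_update[OF r \<open>even m\<close>]
    by (simp del: lie_p.simps add: algebra_simps)
  then show ?thesis
    by simp
qed

lemma lie_n_derivation_proj12_bracket:
  assumes D: "mult_lie_n_derivation mult n D" and "2 \<le> n"
    and r: "e \<odot> r = r" "r \<odot> e = 0" and Dr: "e \<odot> D r = D r" "D r \<odot> e = 0"
  shows "nsm (n - 1) (proj12 (lie_br mult r (D e))) = 0"
proof (cases "even n")
  case True
  define m where "m = n - 2"
  have "n = Suc (Suc m)" "even m"
    using True \<open>2 \<le> n\<close> unfolding m_def by auto
  then show ?thesis
    using lie_n_derivation_proj12_even[of m D r] D r Dr by simp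
next
  case False
  then have "n = Suc (n - 1)" "even (n - 1)"
    using \<open>2 \<le> n\<close> by auto
  then show ?thesis
    using lie_n_derivation_proj12_odd[of "n - 1" D r] D r Dr by simp
qed

lemma peirce11_mult_peirce12:
  assumes tf3: "torsion_free 3 TYPE('a)" and z: "z \<in> center mult"
    and d22: "((one - e) \<odot> d) \<odot> (one - e) = z \<odot> (one - e)"
    and r: "e \<odot> r = r" "r \<odot> e = 0"
    and "proj12 (lie_br mult r d) = 0"
  shows "((e \<odot> d) \<odot> e) \<odot> r = (z \<odot> e) \<odot> r"
proof -
  have "((e \<odot> d) \<odot> e) \<odot> r = proj12 (d \<odot> r)"
    by (simp only: proj12_mult_right[OF r])
  also have "\<dots> = proj12 (r \<odot> d)"
    using \<open>proj12 (lie_br mult r d) = 0\<close> by (simp add: lie_br_def)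
  also have "\<dots> = r \<odot> (z \<odot> (one - e))"
    by (simp only: proj12_mult_left[OF r] d22)
  also have "\<dots> = z \<odot> r"
  proof -
    have "r \<odot> (z \<odot> e) = (z \<odot> r) \<odot> e"
      using center_mult_assoc(2)[OF tf3 z, of r e] center_commute[OF z, of r] by simp
    also have "\<dots> = 0"
      using center_mult_assoc(3)[OF tf3 z, of r e] r by simp
    finally show ?thesis
      using center_commute[OF z, of r] by simp
  qed
  also have "\<dots> = (z \<odot> e) \<odot> r"
    using center_mult_assoc[OF tf3 z] r by simp
  finally show ?thesis .
qed

lemma f_yz_idempotent:
  "f_yz mult ((e \<odot> d) \<odot> (one - e) + ((one - e) \<odot> d) \<odot> e) e e
     = (e \<odot> d) \<odot> (one - e) + ((one - e) \<odot> d) \<odot> e"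
  by (simp add: f_yz_def op_comm_def Lop_def Rop_def algebra_simps)

lemma peirce_diagonal_part:
  "d - ((e \<odot> d) \<odot> (one - e) + ((one - e) \<odot> d) \<odot> e)
     = (e \<odot> d) \<odot> e + ((one - e) \<odot> d) \<odot> (one - e)"
  by (simp add: algebra_simps)

lemma peirce12_memD:
  "x \<in> peirce mult e (one - e) \<Longrightarrow> e \<odot> x = x \<and> x \<odot> e = 0"
  unfolding peirce_def by auto

lemma peirce11_eq_center_mult:
  assumes tf3: "torsion_free 3 TYPE('a)" and tfn1: "torsion_free (int n - 1) TYPE('a)"
    and D: "mult_lie_n_derivation mult n D" and "2 \<le> n"
    and D12: "D ` peirce mult e (one - e) \<subseteq> peirce mult e (one - e)"
    and faithful: "\<And>x. x \<in> peirce mult e e \<Longrightarrow> \<forall>r\<in>peirce mult e (one - e). x \<odot> r = 0 \<Longrightarrow> x = 0"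
    and z: "z \<in> center mult"
    and d22: "((one - e) \<odot> D e) \<odot> (one - e) = z \<odot> (one - e)"
  shows "(e \<odot> D e) \<odot> e = z \<odot> e"
proof -
  have annihilates: "((e \<odot> D e) \<odot> e - z \<odot> e) \<odot> r = 0" if "r \<in> peirce mult e (one - e)" for r
  proof -
    have r: "e \<odot> r = r" "r \<odot> e = 0" and Dr: "e \<odot> D r = D r" "D r \<odot> e = 0"
      using that D12 peirce12_memD by blast+
    have "nsm (nat (int n - 1)) (proj12 (lie_br mult r (D e))) = 0"
      using lie_n_derivation_proj12_bracket[OF D \<open>2 \<le> n\<close> r Dr] \<open>2 \<le> n\<close>
      by (simp add: nat_diff_distrib)
    then have "proj12 (lie_br mult r (D e)) = 0"
      using torsion_freeD[OF tfn1] \<open>2 \<le> n\<close> by simp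
    then show ?thesis
      using peirce11_mult_peirce12[OF tf3 z d22 r] by simp
  qed
  have "(e \<odot> D e) \<odot> e - z \<odot> e = (e \<odot> (D e - z)) \<odot> e"
    using center_commute[OF z, of e, symmetric] by simp
  then have "(e \<odot> D e) \<odot> e - z \<odot> e \<in> peirce mult e e"
    unfolding peirce_def by blast
  with annihilates show ?thesis
    using faithful by fastforce
qed

end

theorem lemma3p5:
  fixes mult :: "'a::ab_group_add \<Rightarrow> 'a \<Rightarrow> 'a"
    and one e1 e2 :: 'a
    and n :: nat
    and D :: "'a \<Rightarrow> 'a"
  assumes n2: "n \<ge> 2"
    and ring: "unital_alternative_ring mult one"
    and tf2: "torsion_free 2 TYPE('a)"
    and tf3: "torsion_free 3 TYPE('a)"
    and tfn1: "torsion_free (int n - 1) TYPE('a)"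
    and tfn3: "torsion_free (int n - 3) TYPE('a)"
    and idem: "mult e1 e1 = e1" and e1_nz: "e1 \<noteq> 0" and e1_n1: "e1 \<noteq> one"
    and e2_def: "e2 = one - e1"
    and c1a: "\<And>x. x \<in> peirce mult e1 e2 \<Longrightarrow> (\<forall>r\<in>peirce mult e2 e1. mult x r = 0) \<Longrightarrow> x = 0"
    and c1b: "\<And>x. x \<in> peirce mult e2 e1 \<Longrightarrow> (\<forall>r\<in>peirce mult e1 e2. mult x r = 0) \<Longrightarrow> x = 0"
    and c2: "\<And>x. x \<in> peirce mult e1 e1 \<Longrightarrow>
               (\<forall>r\<in>peirce mult e1 e2. mult x r = 0) \<or> (\<forall>r\<in>peirce mult e2 e1. mult r x = 0) \<Longrightarrow> x = 0"
    and c3: "\<And>x. x \<in> peirce mult e2 e2 \<Longrightarrow>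
               (\<forall>r\<in>peirce mult e1 e2. mult r x = 0) \<or> (\<forall>r\<in>peirce mult e2 e1. mult x r = 0) \<Longrightarrow> x = 0"
    and c4: "\<And>z. z \<in> center mult \<Longrightarrow> z \<noteq> 0 \<Longrightarrow> {mult z r | r. True} = UNIV"
    and Dder: "mult_lie_n_derivation mult n D"
    and Da: "\<And>x. x \<in> peirce mult e1 e1 \<Longrightarrow>
               mult (mult e2 (D x)) e2 \<in> {mult z e2 | z. z \<in> center mult}"
    and Db: "\<And>x. x \<in> peirce mult e2 e2 \<Longrightarrow>
               mult (mult e1 (D x)) e1 \<in> {mult z e1 | z. z \<in> center mult}"
    and Dc12: "D ` peirce mult e1 e2 \<subseteq> peirce mult e1 e2"
    and Dc21: "D ` peirce mult e2 e1 \<subseteq> peirce mult e2 e1"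
  shows "D e1 - f_yz mult (mult (mult e1 (D e1)) e2 + mult (mult e2 (D e1)) e1) e1 e1
           \<in> center mult"
proof -
  interpret alternative_ring_idempotent mult one e1
    using ring idem by unfold_locales
  have "e1 \<in> peirce mult e1 e1"
    unfolding peirce_def by (auto intro: exI[of _ e1])
  then obtain z where z: "z \<in> center mult" and d22: "mult (mult e2 (D e1)) e2 = mult z e2"
    using Da by blast
  have d11: "mult (mult e1 (D e1)) e1 = mult z e1"
    using peirce11_eq_center_mult[OF tf3 tfn1 Dder n2 _ _ z] c2 Dc12 d22
    unfolding e2_def by blast
  have "D e1 - f_yz mult (mult (mult e1 (D e1)) e2 + mult (mult e2 (D e1)) e1) e1 e1
      = mult (mult e1 (D e1)) e1 + mult (mult e2 (D e1)) e2"
    unfolding e2_def f_yz_idempotent by (rule peirce_diagonal_part)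
  also have "\<dots> = z"
    unfolding d11 d22 by (simp add: e2_def)
  finally show ?thesis
    using z by simp
qed

end
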